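(* For every LDBA $A$ with $n$ states, of which $n_d$ lie in the deterministic part $Q_d$, there is a deterministic parity automaton $B$ with $\mathsf L(B)=\mathsf L(A)$ having at most $2^{n}\cdot\sum_{i=0}^{n_d}\frac{n_d!}{(n_d-i)!}\le 2^n\cdot e\cdot n_d\cdot n_d!$ states (hence $2^{\mathcal O(n\log n)}$ states) and using at most $2n_d+1$ colors (hence $\mathcal O(n)$ colors).
   Context: A (transition-based) nondeterministic Büchi automaton is $A=(Q,q_0,\Sigma,\delta,\alpha)$ with finite $Q$, $q_0\in Q$, finite alphabet $\Sigma$, total $\delta\subseteq Q\times\Sigma\times Q$, accepting transitions $\alpha\subseteq\delta$; a run is accepting if it uses transitions of $\alpha$ infinitely often. An LDBA additionally has $Q_d\subseteq Q$ with (1) $\alpha\subseteq Q_d\times\Sigma\times Q_d$; (2) each $q\in Q_d$ has exactly one $\sigma$-successor for each $\sigma$; (3) successors of states in $Q_d$ lie in $Q_d$; and $q_0\notin Q_d$. A deterministic parity automaton (DPA) has a deterministic total transition function and a coloring of transitions by positive integers; a word is accepted iff the minimal color seen infinitely often on its run is even. $e$ denotes Euler's number. *)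

theory Defs
  imports Complex_Main
begin

definition is_nba :: "'q set \<Rightarrow> 'q \<Rightarrow> 'a set \<Rightarrow> ('q \<times> 'a \<times> 'q) set \<Rightarrow> ('q \<times> 'a \<times> 'q) set \<Rightarrow> bool" where
  "is_nba Q q0 \<Sigma> \<delta> \<alpha> \<longleftrightarrow>
     finite Q \<and> q0 \<in> Q \<and> finite \<Sigma> \<and> \<delta> \<subseteq> Q \<times> \<Sigma> \<times> Q \<and>
     (\<forall>q\<in>Q. \<forall>\<sigma>\<in>\<Sigma>. \<exists>q'. (q, \<sigma>, q') \<in> \<delta>) \<and> \<alpha> \<subseteq> \<delta>"

definition is_ldba :: "'q set \<Rightarrow> 'q \<Rightarrow> 'a set \<Rightarrow> ('q \<times> 'a \<times> 'q) set \<Rightarrow> ('q \<times> 'a \<times> 'q) set \<Rightarrow> 'q set \<Rightarrow> bool" where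
  "is_ldba Q q0 \<Sigma> \<delta> \<alpha> Qd \<longleftrightarrow>
     is_nba Q q0 \<Sigma> \<delta> \<alpha> \<and> Qd \<subseteq> Q \<and>
     \<alpha> \<subseteq> Qd \<times> \<Sigma> \<times> Qd \<and>
     (\<forall>q\<in>Qd. \<forall>\<sigma>\<in>\<Sigma>. \<exists>!q'. (q, \<sigma>, q') \<in> \<delta>) \<and>
     (\<forall>q \<sigma> q'. (q, \<sigma>, q') \<in> \<delta> \<and> q \<in> Qd \<longrightarrow> q' \<in> Qd) \<and>
     q0 \<notin> Qd"

definition words :: "'a set \<Rightarrow> (nat \<Rightarrow> 'a) set" where
  "words \<Sigma> = {w. \<forall>i. w i \<in> \<Sigma>}"

definition nba_run :: "'q \<Rightarrow> ('q \<times> 'a \<times> 'q) set \<Rightarrow> (nat \<Rightarrow> 'a) \<Rightarrow> (nat \<Rightarrow> 'q) \<Rightarrow> bool" where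
  "nba_run q0 \<delta> w r \<longleftrightarrow> r 0 = q0 \<and> (\<forall>i. (r i, w i, r (Suc i)) \<in> \<delta>)"

definition nba_lang :: "'q \<Rightarrow> 'a set \<Rightarrow> ('q \<times> 'a \<times> 'q) set \<Rightarrow> ('q \<times> 'a \<times> 'q) set \<Rightarrow> (nat \<Rightarrow> 'a) set" where
  "nba_lang q0 \<Sigma> \<delta> \<alpha> = {w \<in> words \<Sigma>. \<exists>r. nba_run q0 \<delta> w r \<and>
      infinite {i. (r i, w i, r (Suc i)) \<in> \<alpha>}}"

definition is_dpa :: "'p set \<Rightarrow> 'p \<Rightarrow> 'a set \<Rightarrow> ('p \<Rightarrow> 'a \<Rightarrow> 'p) \<Rightarrow> ('p \<Rightarrow> 'a \<Rightarrow> nat) \<Rightarrow> bool" where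
  "is_dpa P p0 \<Sigma> tr col \<longleftrightarrow>
     finite P \<and> p0 \<in> P \<and> finite \<Sigma> \<and>
     (\<forall>p\<in>P. \<forall>\<sigma>\<in>\<Sigma>. tr p \<sigma> \<in> P \<and> col p \<sigma> \<ge> 1)"

fun dpa_run :: "'p \<Rightarrow> ('p \<Rightarrow> 'a \<Rightarrow> 'p) \<Rightarrow> (nat \<Rightarrow> 'a) \<Rightarrow> nat \<Rightarrow> 'p" where
  "dpa_run p0 tr w 0 = p0"
| "dpa_run p0 tr w (Suc i) = tr (dpa_run p0 tr w i) (w i)"

definition dpa_lang :: "'p \<Rightarrow> 'a set \<Rightarrow> ('p \<Rightarrow> 'a \<Rightarrow> 'p) \<Rightarrow> ('p \<Rightarrow> 'a \<Rightarrow> nat) \<Rightarrow> (nat \<Rightarrow> 'a) set" where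
  "dpa_lang p0 \<Sigma> tr col = {w \<in> words \<Sigma>.
      even (Min {c. infinite {i. col (dpa_run p0 tr w i) (w i) = c}})}"

definition dpa_colours :: "'p set \<Rightarrow> 'a set \<Rightarrow> ('p \<Rightarrow> 'a \<Rightarrow> nat) \<Rightarrow> nat set" where
  "dpa_colours P \<Sigma> col = {col p \<sigma> | p \<sigma>. p \<in> P \<and> \<sigma> \<in> \<Sigma>}"

end

theory Submission
  imports Defs "HOL-Library.Infinite_Set"
begin

text \<open>The DPA runs a subset construction on the states outside Qd and keeps the reached states
  of Qd in a list ordered by the age of the runs that reached them. When several runs in Qd merge,
  only the oldest survives: the merge at position i emits the odd colour 2i+1, and an accepting
  transition taken at position i emits the even colour 2i+2. An accepting run of the LDBA
  eventually stays in Qd; from then on its position in the list never increases, so it stabilises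
  at some p, after which no odd colour below 2p+2 occurs while 2p+2 occurs infinitely often.
  Conversely, if the least colour seen infinitely often is 2p+2, the entry at position p is
  eventually never merged, so it follows one run of the deterministic part which is accepting
  infinitely often. There are at most 2^n choices of the subset and
  \<Sum>i\<le>nd. nd!/(nd-i)! of the list.\<close>

text \<open>Unlike remdups, dedup keeps the first occurrence of each element.\<close>

definition dedup :: "'a list \<Rightarrow> 'a list" where
  "dedup xs = rev (remdups (rev xs))"

lemma set_dedup [simp]: "set (dedup xs) = set xs"
  by (simp add: dedup_def)

lemma distinct_dedup [simp]: "distinct (dedup xs)"
  by (simp add: dedup_def)

lemma length_dedup: "length (dedup xs) = card (set xs)"
  by (metis distinct_card distinct_dedup set_dedup)

lemma dedup_distinct_id: "distinct xs \<Longrightarrow> dedup xs = xs"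
  by (simp add: dedup_def distinct_remdups_id)

lemma remdups_append_filter: "remdups (xs @ ys) = filter (\<lambda>x. x \<notin> set ys) (remdups xs) @ remdups ys"
  by (induction xs) auto

lemma dedup_append: "dedup (xs @ ys) = dedup xs @ filter (\<lambda>y. y \<notin> set xs) (dedup ys)"
  by (simp add: dedup_def remdups_append_filter rev_filter)

lemma take_dedup: "distinct (take n xs) \<Longrightarrow> take n (dedup xs) = take n xs"
  using dedup_append[of "take n xs" "drop n xs"]
  by (cases "n \<le> length xs") (simp_all add: dedup_distinct_id)

lemma dedup_nth_earlier:
  assumes "i < length xs"
  obtains j where "j < length (dedup xs)" "dedup xs ! j = xs ! i" "j \<le> i"
    "\<not> distinct (take (Suc i) xs) \<Longrightarrow> j < i"
proof -
  let ?pre = "take (Suc i) xs"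
  have "xs ! i \<in> set (dedup ?pre)"
    using assms by (simp add: take_Suc_conv_app_nth)
  then obtain j where j: "j < length (dedup ?pre)" "dedup ?pre ! j = xs ! i"
    by (metis in_set_conv_nth)
  obtain ys where ys: "dedup xs = dedup ?pre @ ys"
    by (metis append_take_drop_id dedup_append)
  have "length (dedup ?pre) \<le> Suc i"
    using card_length[of ?pre] by (simp add: length_dedup)
  moreover have "\<not> distinct ?pre \<Longrightarrow> length (dedup ?pre) \<le> i"
    using card_length[of ?pre] card_distinct[of ?pre] assms
    by (auto simp: length_dedup le_Suc_eq)
  ultimately show thesis
    using j by (intro that[of j]) (auto simp: ys nth_append)
qed

section \<open>Sequences of natural numbers\<close>

definition inf_often_min :: "(nat \<Rightarrow> nat) \<Rightarrow> nat" where
  "inf_often_min c = Min {v. infinite {k. c k = v}}"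

lemma inf_often_le_value:
  assumes "finite (range c)" "infinite {k. c k \<le> u}"
  obtains v where "v \<le> u" "infinite {k. c k = v}"
proof -
  have "finite (c ` {k. c k \<le> u})"
    using assms(1) by (rule finite_subset[rotated]) auto
  then obtain v where "v \<in> c ` {k. c k \<le> u}" "infinite (c -` {v} \<inter> {k. c k \<le> u})"
    using assms(2) by (blast elim: inf_img_fin_domE')
  moreover have "c -` {v} \<inter> {k. c k \<le> u} \<subseteq> {k. c k = v}"
    by auto
  ultimately show thesis
    using that[of v] infinite_super by blast
qed

lemma inf_often_values:
  fixes c :: "nat \<Rightarrow> nat"
  assumes "finite (range c)"
  shows "finite {v. infinite {k. c k = v}}" "{v. infinite {k. c k = v}} \<noteq> {}"
proof -
  have "{v. infinite {k. c k = v}} \<subseteq> range c"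
    by (auto dest: not_finite_existsD)
  then show "finite {v. infinite {k. c k = v}}"
    using assms by (rule finite_subset)
  obtain u where "\<forall>k. c k \<le> u"
    using assms by (meson finite_nat_set_iff_bounded_le rangeI)
  then show "{v. infinite {k. c k = v}} \<noteq> {}"
    using inf_often_le_value[OF assms, of u] by auto
qed

lemma inf_often_min_occurs:
  "finite (range c) \<Longrightarrow> infinite {k. c k = inf_often_min c}"
  using Min_in[OF inf_often_values] unfolding inf_often_min_def by auto

lemma inf_often_min_le:
  "finite (range c) \<Longrightarrow> infinite {k. c k \<le> u} \<Longrightarrow> inf_often_min c \<le> u"
  unfolding inf_often_min_def
  by (metis (mono_tags) Min_le inf_often_le_value inf_often_values(1) le_trans mem_Collect_eq)

lemma eventually_ge_inf_often_min:
  assumes "finite (range c)"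
  obtains K where "\<And>k. k \<ge> K \<Longrightarrow> inf_often_min c \<le> c k"
proof -
  have "finite {k. c k < inf_often_min c}"
  proof -
    have "{k. c k < inf_often_min c} = (\<Union>v<inf_often_min c. {k. c k = v})"
      by auto
    moreover have "finite {k. c k = v}" if "v < inf_often_min c" for v
      using that Min_le[OF inf_often_values(1)[OF assms], of v]
      unfolding inf_often_min_def by auto
    ultimately show ?thesis by simp
  qed
  then obtain K where "\<forall>k\<in>{k. c k < inf_often_min c}. k < K"
    by (meson finite_nat_set_iff_bounded)
  then show thesis
    using that[of K] by (meson leD mem_Collect_eq not_le_imp_less)
qed

lemma nonincreasing_eventually_const:
  fixes f :: "nat \<Rightarrow> nat"
  assumes "\<And>k. k \<ge> t \<Longrightarrow> f (Suc k) \<le> f k"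
  obtains K where "K \<ge> t" "\<And>k. k \<ge> K \<Longrightarrow> f k = f K"
proof -
  define v where "v = (LEAST v. \<exists>k\<ge>t. f k = v)"
  obtain K where K: "K \<ge> t" "f K = v"
    using LeastI_ex[of "\<lambda>v. \<exists>k\<ge>t. f k = v"] unfolding v_def by blast
  have "f k = f K" if "k \<ge> K" for k
  proof -
    have "f k \<le> f K"
      using that
    proof (induction k rule: dec_induct)
      case (step k)
      then show ?case using assms[of k] K by simp
    qed simp
    moreover have "v \<le> f k"
      unfolding v_def using that K(1) by (intro Least_le exI[of _ k]) simp
    ultimately show ?thesis using K by simp
  qed
  then show thesis using that K by blast
qed

section \<open>Runs of automata\<close>

lemma dpa_rename_states_nat:
  assumes "is_dpa P p0 \<Sigma> tr col"
  obtains P' :: "nat set" and p0' tr' col' where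
    "is_dpa P' p0' \<Sigma> tr' col'" "dpa_lang p0' \<Sigma> tr' col' = dpa_lang p0 \<Sigma> tr col"
    "card P' = card P" "dpa_colours P' \<Sigma> col' = dpa_colours P \<Sigma> col"
proof -
  have fin: "finite P" and p0: "p0 \<in> P" and "finite \<Sigma>"
    and closed: "\<And>p \<sigma>. p \<in> P \<Longrightarrow> \<sigma> \<in> \<Sigma> \<Longrightarrow> tr p \<sigma> \<in> P \<and> col p \<sigma> \<ge> 1"
    using assms unfolding is_dpa_def by auto
  obtain h where h: "bij_betw h P {0..<card P}"
    using ex_bij_betw_finite_nat[OF fin] by blast
  define g where "g = inv_into P h"
  have gh: "\<And>p. p \<in> P \<Longrightarrow> g (h p) = p"
    unfolding g_def using h bij_betw_inv_into_left by fastforce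
  define tr' where "tr' m \<sigma> = h (tr (g m) \<sigma>)" for m \<sigma>
  define col' where "col' m \<sigma> = col (g m) \<sigma>" for m \<sigma>
  have run: "dpa_run (h p0) tr' w k = h (dpa_run p0 tr w k) \<and> dpa_run p0 tr w k \<in> P"
    if "w \<in> words \<Sigma>" for w k
    using that by (induction k) (auto simp: p0 closed gh tr'_def words_def)
  have col_eq: "col' (dpa_run (h p0) tr' w k) (w k) = col (dpa_run p0 tr w k) (w k)"
    if "w \<in> words \<Sigma>" for w k
    using run[OF that, of k] gh by (simp add: col'_def)
  show thesis
  proof (rule that)
    show "is_dpa (h ` P) (h p0) \<Sigma> tr' col'"
      unfolding is_dpa_def using fin p0 \<open>finite \<Sigma>\<close> closed gh by (auto simp: tr'_def col'_def)
    show "dpa_lang (h p0) \<Sigma> tr' col' = dpa_lang p0 \<Sigma> tr col"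
      unfolding dpa_lang_def using col_eq by auto
    show "card (h ` P) = card P"
      using h by (simp add: bij_betw_def card_image)
    show "dpa_colours (h ` P) \<Sigma> col' = dpa_colours P \<Sigma> col"
      unfolding dpa_colours_def col'_def using gh by force
  qed
qed

definition nba_reaches :: "'q \<Rightarrow> ('q \<times> 'a \<times> 'q) set \<Rightarrow> (nat \<Rightarrow> 'a) \<Rightarrow> nat \<Rightarrow> 'q \<Rightarrow> bool" where
  "nba_reaches q0 \<delta> w k q \<longleftrightarrow>
     (\<exists>\<rho>. \<rho> 0 = q0 \<and> \<rho> k = q \<and> (\<forall>i<k. (\<rho> i, w i, \<rho> (Suc i)) \<in> \<delta>))"

lemma nba_reaches_0: "nba_reaches q0 \<delta> w 0 q0"
  unfolding nba_reaches_def by auto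

lemma nba_reaches_Suc:
  assumes "nba_reaches q0 \<delta> w k p" "(p, w k, q) \<in> \<delta>"
  shows "nba_reaches q0 \<delta> w (Suc k) q"
proof -
  obtain \<rho> where \<rho>: "\<rho> 0 = q0" "\<rho> k = p" "\<forall>i<k. (\<rho> i, w i, \<rho> (Suc i)) \<in> \<delta>"
    using assms(1) unfolding nba_reaches_def by blast
  then show ?thesis
    unfolding nba_reaches_def using assms(2)
    by (intro exI[of _ "\<rho>(Suc k := q)"]) (auto simp: less_Suc_eq)
qed

lemma nba_run_extend:
  assumes "nba_reaches q0 \<delta> w k0 (x k0)" "\<And>k. k \<ge> k0 \<Longrightarrow> (x k, w k, x (Suc k)) \<in> \<delta>"
  obtains r where "nba_run q0 \<delta> w r" "\<And>k. k \<ge> k0 \<Longrightarrow> r k = x k"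
proof -
  obtain \<rho> where \<rho>: "\<rho> 0 = q0" "\<rho> k0 = x k0" "\<forall>i<k0. (\<rho> i, w i, \<rho> (Suc i)) \<in> \<delta>"
    using assms(1) unfolding nba_reaches_def by blast
  define r where "r k = (if k \<le> k0 then \<rho> k else x k)" for k
  have "(r k, w k, r (Suc k)) \<in> \<delta>" for k
    using \<rho> assms(2)[of k] by (cases k k0 rule: linorder_cases) (auto simp: r_def)
  then have "nba_run q0 \<delta> w r"
    unfolding nba_run_def using \<rho>(1) by (simp add: r_def)
  moreover have "r k = x k" if "k \<ge> k0" for k
    using that \<rho>(2) by (simp add: r_def)
  ultimately show thesis by (rule that)
qed

section \<open>Counting\<close>

lemma card_distinct_lists:
  assumes "finite A"
  shows "card {xs. distinct xs \<and> set xs \<subseteq> A} = (\<Sum>i = 0..card A. fact (card A) div fact (card A - i))"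
proof -
  let ?lists = "\<lambda>k. {xs. length xs = k \<and> distinct xs \<and> set xs \<subseteq> A}"
  have "length xs \<le> card A" if "distinct xs" "set xs \<subseteq> A" for xs
    using that by (metis assms card_mono distinct_card)
  then have "{xs. distinct xs \<and> set xs \<subseteq> A} = (\<Union>k\<in>{0..card A}. ?lists k)"
    by auto
  moreover have "finite (?lists k)" for k
    by (rule finite_subset[OF _ finite_lists_length_eq[OF assms, of k]]) auto
  then have "card (\<Union>k\<in>{0..card A}. ?lists k) = (\<Sum>k = 0..card A. card (?lists k))"
    by (intro card_UN_disjoint) auto
  ultimately have "card {xs. distinct xs \<and> set xs \<subseteq> A} = (\<Sum>k = 0..card A. card (?lists k))"
    by simp
  also have "\<dots> = (\<Sum>k = 0..card A. fact (card A) div fact (card A - k))"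
  proof (rule sum.cong)
    fix k assume "k \<in> {0..card A}"
    then show "card (?lists k) = fact (card A) div fact (card A - k)"
      using card_lists_distinct_length_eq[OF assms] fact_div_fact[of "card A - k" "card A"] by simp
  qed simp
  finally show ?thesis .
qed

lemma sum_fact_div_le_exp:
  fixes m :: nat
  assumes "m \<ge> 1"
  shows "real (\<Sum>i = 0..m. fact m div fact (m - i)) \<le> exp 1 * m * fact m"
proof -
  have "(\<Sum>i = 0..m. fact m div fact (m - i)) \<le> of_nat (card {0..m}) * (fact m :: nat)"
    by (rule sum_bounded_above) (rule div_le_dividend)
  then have "real (\<Sum>i = 0..m. fact m div fact (m - i)) \<le> (real m + 1) * fact m"
    by (metis Suc_eq_plus1 card_atLeastAtMost diff_zero of_nat_1 of_nat_add of_nat_fact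
        of_nat_id of_nat_le_iff of_nat_mult)
  also have "\<dots> \<le> exp 1 * m * fact m"
  proof -
    have "2 \<le> exp (1::real)"
      using exp_ge_add_one_self[of 1] by simp
    then have "2 * real m \<le> exp 1 * m"
      by (rule mult_right_mono) simp
    moreover have "1 \<le> real m"
      using assms by simp
    ultimately have "real m + 1 \<le> exp 1 * m"
      by linarith
    then show ?thesis by (simp add: mult_right_mono)
  qed
  finally show ?thesis .
qed

section \<open>The construction\<close>

locale ldba =
  fixes Q :: "'q set" and q0 :: 'q and \<Sigma> :: "'a set"
    and \<delta> \<alpha> :: "('q \<times> 'a \<times> 'q) set" and Qd :: "'q set"
  assumes ldba: "is_ldba Q q0 \<Sigma> \<delta> \<alpha> Qd"
begin

lemma finite_Q: "finite Q"
  and finite_\<Sigma>: "finite \<Sigma>"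
  and q0_in_Q: "q0 \<in> Q"
  and q0_notin_Qd: "q0 \<notin> Qd"
  and Qd_subset_Q: "Qd \<subseteq> Q"
  and trans_subset: "\<delta> \<subseteq> Q \<times> \<Sigma> \<times> Q"
  and acc_subset_Qd: "\<alpha> \<subseteq> Qd \<times> \<Sigma> \<times> Qd"
  and Qd_deterministic: "q \<in> Qd \<Longrightarrow> \<sigma> \<in> \<Sigma> \<Longrightarrow> \<exists>!q'. (q, \<sigma>, q') \<in> \<delta>"
  and Qd_closed: "(q, \<sigma>, q') \<in> \<delta> \<Longrightarrow> q \<in> Qd \<Longrightarrow> q' \<in> Qd"
  using ldba unfolding is_ldba_def is_nba_def by blast+

lemma finite_Qd: "finite Qd"
  using finite_Q Qd_subset_Q by (rule finite_subset[rotated])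

definition dsucc :: "'q \<Rightarrow> 'a \<Rightarrow> 'q" where
  "dsucc q \<sigma> = (THE q'. (q, \<sigma>, q') \<in> \<delta>)"

lemma dsucc_trans: "q \<in> Qd \<Longrightarrow> \<sigma> \<in> \<Sigma> \<Longrightarrow> (q, \<sigma>, dsucc q \<sigma>) \<in> \<delta>"
  unfolding dsucc_def by (rule theI') (rule Qd_deterministic)

lemma dsucc_unique: "q \<in> Qd \<Longrightarrow> (q, \<sigma>, q') \<in> \<delta> \<Longrightarrow> q' = dsucc q \<sigma>"
  using trans_subset Qd_deterministic
  unfolding dsucc_def by (metis (no_types, lifting) SigmaD1 SigmaD2 subsetD the1_equality)

lemma dsucc_in_Qd: "q \<in> Qd \<Longrightarrow> \<sigma> \<in> \<Sigma> \<Longrightarrow> dsucc q \<sigma> \<in> Qd"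
  using dsucc_trans Qd_closed by blast

text \<open>A DPA state (S, L) consists of the reached states S outside Qd and the list L of reached
  states in Qd, oldest run first; states entering Qd in the same step are appended in the order
  of the fixed enumeration Qd_list.\<close>

definition Qd_list :: "'q list" where
  "Qd_list = (SOME xs. set xs = Qd)"

lemma set_Qd_list: "set Qd_list = Qd"
  unfolding Qd_list_def using finite_list[OF finite_Qd] by (rule someI_ex)

definition succ_list :: "'q list \<Rightarrow> 'a \<Rightarrow> 'q list" where
  "succ_list L \<sigma> = map (\<lambda>q. dsucc q \<sigma>) L"

definition entering :: "'q set \<Rightarrow> 'a \<Rightarrow> 'q list" where
  "entering S \<sigma> = filter (\<lambda>q'. \<exists>q\<in>S. (q, \<sigma>, q') \<in> \<delta>) Qd_list"

definition list_step :: "'q set \<Rightarrow> 'q list \<Rightarrow> 'a \<Rightarrow> 'q list" where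
  "list_step S L \<sigma> = dedup (succ_list L \<sigma> @ entering S \<sigma>)"

definition succs_outside_Qd :: "'q set \<Rightarrow> 'a \<Rightarrow> 'q set" where
  "succs_outside_Qd S \<sigma> = {q'. \<exists>q\<in>S. (q, \<sigma>, q') \<in> \<delta> \<and> q' \<notin> Qd}"

definition dstep :: "'q set \<times> 'q list \<Rightarrow> 'a \<Rightarrow> 'q set \<times> 'q list" where
  "dstep p \<sigma> = (succs_outside_Qd (fst p) \<sigma>, list_step (fst p) (snd p) \<sigma>)"

definition merged :: "'q list \<Rightarrow> 'a \<Rightarrow> nat \<Rightarrow> bool" where
  "merged L \<sigma> i \<longleftrightarrow> \<not> distinct (take (Suc i) (succ_list L \<sigma>))"

definition accepting_at :: "'q list \<Rightarrow> 'a \<Rightarrow> nat \<Rightarrow> bool" where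
  "accepting_at L \<sigma> i \<longleftrightarrow> (L ! i, \<sigma>, dsucc (L ! i) \<sigma>) \<in> \<alpha>"

text \<open>The default colour 2 * card Qd + 1 exceeds every colour emitted at a position.\<close>

definition colour_candidates :: "'q list \<Rightarrow> 'a \<Rightarrow> nat set" where
  "colour_candidates L \<sigma> = insert (2 * card Qd + 1)
     ({2 * i + 1 |i. i < length L \<and> merged L \<sigma> i} \<union> {2 * i + 2 |i. i < length L \<and> accepting_at L \<sigma> i})"

definition colour :: "'q set \<times> 'q list \<Rightarrow> 'a \<Rightarrow> nat" where
  "colour p \<sigma> = Min (colour_candidates (snd p) \<sigma>)"

lemma merged_mono: "merged L \<sigma> i \<Longrightarrow> i \<le> j \<Longrightarrow> merged L \<sigma> j"
  unfolding merged_def by (metis Suc_le_mono distinct_take min.absorb1 take_take)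

lemma finite_colour_candidates: "finite (colour_candidates L \<sigma>)"
proof -
  have "colour_candidates L \<sigma> \<subseteq>
      insert (2 * card Qd + 1) ((\<lambda>i. 2 * i + 1) ` {..<length L} \<union> (\<lambda>i. 2 * i + 2) ` {..<length L})"
    unfolding colour_candidates_def by auto
  then show ?thesis by (rule finite_subset) simp
qed

lemma colour_in_candidates: "colour p \<sigma> \<in> colour_candidates (snd p) \<sigma>"
  unfolding colour_def using finite_colour_candidates
  by (rule Min_in) (simp add: colour_candidates_def)

lemma colour_le: "c \<in> colour_candidates (snd p) \<sigma> \<Longrightarrow> colour p \<sigma> \<le> c"
  unfolding colour_def using finite_colour_candidates by (rule Min_le)

lemma colour_range: "colour p \<sigma> \<in> {1..2 * card Qd + 1}"
  using colour_in_candidates[of p \<sigma>] colour_le[of "2 * card Qd + 1" p \<sigma>]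
  unfolding colour_candidates_def by auto

lemma colour_le_merged: "i < length (snd p) \<Longrightarrow> merged (snd p) \<sigma> i \<Longrightarrow> colour p \<sigma> \<le> 2 * i + 1"
  by (rule colour_le) (auto simp: colour_candidates_def)

lemma colour_le_accepting:
  "i < length (snd p) \<Longrightarrow> accepting_at (snd p) \<sigma> i \<Longrightarrow> colour p \<sigma> \<le> 2 * i + 2"
  by (rule colour_le) (auto simp: colour_candidates_def)

lemma odd_colour_merged:
  assumes "odd (colour p \<sigma>)" "colour p \<sigma> \<le> 2 * i + 1" "i < card Qd"
  shows "merged (snd p) \<sigma> i"
  using colour_in_candidates[of p \<sigma>] assms merged_mono
  unfolding colour_candidates_def by fastforce

lemma even_colour_accepting:
  assumes "colour p \<sigma> = 2 * i + 2"
  shows "i < length (snd p) \<and> accepting_at (snd p) \<sigma> i"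
  using colour_in_candidates[of p \<sigma>] assms unfolding colour_candidates_def by auto presburger+

lemma list_step_nth_earlier:
  assumes "i < length L"
  obtains j where "j < length (list_step S L \<sigma>)" "list_step S L \<sigma> ! j = dsucc (L ! i) \<sigma>"
    "j \<le> i" "merged L \<sigma> i \<Longrightarrow> j < i"
  using dedup_nth_earlier[of i "succ_list L \<sigma> @ entering S \<sigma>"] assms that
  by (auto simp: list_step_def merged_def succ_list_def nth_append)

lemma list_step_nth_unmerged:
  assumes "i < length L" "\<not> merged L \<sigma> i"
  shows "i < length (list_step S L \<sigma>) \<and> list_step S L \<sigma> ! i = dsucc (L ! i) \<sigma>"
proof -
  let ?xs = "succ_list L \<sigma> @ entering S \<sigma>"
  have "take (Suc i) (list_step S L \<sigma>) = take (Suc i) ?xs"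
    using assms unfolding list_step_def merged_def succ_list_def by (intro take_dedup) simp
  then have prefix: "take (Suc i) (list_step S L \<sigma>) = take (Suc i) (succ_list L \<sigma>)"
    using assms(1) by (simp add: succ_list_def)
  then have "length (take (Suc i) (list_step S L \<sigma>)) = Suc i"
    using assms(1) by (simp add: succ_list_def)
  then have len: "i < length (list_step S L \<sigma>)" by simp
  have "list_step S L \<sigma> ! i = take (Suc i) (list_step S L \<sigma>) ! i" by simp
  also have "\<dots> = dsucc (L ! i) \<sigma>"
    using assms(1) by (simp add: prefix succ_list_def)
  finally show ?thesis using len by simp
qed

lemma set_list_step:
  "set (list_step S L \<sigma>) = (\<lambda>q. dsucc q \<sigma>) ` set L \<union> {q' \<in> Qd. \<exists>q\<in>S. (q, \<sigma>, q') \<in> \<delta>}"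
  by (auto simp: list_step_def succ_list_def entering_def set_Qd_list)

definition dstates :: "('q set \<times> 'q list) set" where
  "dstates = Pow (Q - Qd) \<times> {L. distinct L \<and> set L \<subseteq> Qd}"

lemma initial_in_dstates: "({q0}, []) \<in> dstates"
  unfolding dstates_def using q0_in_Q q0_notin_Qd by auto

lemma dstep_in_dstates:
  assumes "p \<in> dstates" "\<sigma> \<in> \<Sigma>"
  shows "dstep p \<sigma> \<in> dstates"
proof -
  have "succs_outside_Qd (fst p) \<sigma> \<subseteq> Q - Qd"
    unfolding succs_outside_Qd_def using trans_subset by blast
  moreover have "set (list_step (fst p) (snd p) \<sigma>) \<subseteq> Qd"
    using assms dsucc_in_Qd unfolding set_list_step dstates_def by auto
  moreover have "distinct (list_step (fst p) (snd p) \<sigma>)"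
    by (simp add: list_step_def)
  ultimately show ?thesis
    unfolding dstates_def dstep_def by simp
qed

lemma length_le_card_Qd:
  assumes "p \<in> dstates"
  shows "length (snd p) \<le> card Qd"
proof -
  have "distinct (snd p)" "set (snd p) \<subseteq> Qd"
    using assms unfolding dstates_def by auto
  then show ?thesis
    by (metis card_mono distinct_card finite_Qd)
qed

definition drun :: "(nat \<Rightarrow> 'a) \<Rightarrow> nat \<Rightarrow> 'q set \<times> 'q list" where
  "drun w = dpa_run ({q0}, []) dstep w"

lemma drun_0 [simp]: "drun w 0 = ({q0}, [])"
  and drun_Suc [simp]: "drun w (Suc k) = dstep (drun w k) (w k)"
  by (simp_all add: drun_def)

lemma drun_in_dstates: "w \<in> words \<Sigma> \<Longrightarrow> drun w k \<in> dstates"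
  by (induction k) (simp_all add: words_def initial_in_dstates dstep_in_dstates)

lemma drun_list_subset_Qd: "w \<in> words \<Sigma> \<Longrightarrow> set (snd (drun w k)) \<subseteq> Qd"
  using drun_in_dstates[of w k] unfolding dstates_def by auto

lemma finite_range_colours: "finite (range (\<lambda>k. colour (drun w k) (w k)))"
proof -
  have "range (\<lambda>k. colour (drun w k) (w k)) \<subseteq> {1..2 * card Qd + 1}"
    using colour_range by blast
  then show ?thesis by (rule finite_subset) simp
qed

lemma dstep_predecessor:
  assumes "set (snd p) \<subseteq> Qd" "\<sigma> \<in> \<Sigma>" "q \<in> fst (dstep p \<sigma>) \<union> set (snd (dstep p \<sigma>))"
  obtains q' where "q' \<in> fst p \<union> set (snd p)" "(q', \<sigma>, q) \<in> \<delta>"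
proof -
  consider "\<exists>q'\<in>fst p. (q', \<sigma>, q) \<in> \<delta>" | q' where "q' \<in> set (snd p)" "q = dsucc q' \<sigma>"
    using assms(3) by (auto simp: dstep_def succs_outside_Qd_def set_list_step)
  then show thesis
  proof cases
    case 1
    then show thesis using that by blast
  next
    case (2 q')
    then show thesis using that[of q'] assms(1,2) dsucc_trans by blast
  qed
qed

lemma dstep_successor:
  assumes "set (snd p) \<subseteq> Qd" "q \<in> fst p \<union> set (snd p)" "(q, \<sigma>, q') \<in> \<delta>"
  shows "q' \<in> fst (dstep p \<sigma>) \<union> set (snd (dstep p \<sigma>))"
proof (cases "q \<in> set (snd p)")
  case True
  then have "q' = dsucc q \<sigma>" using assms(1,3) dsucc_unique by blast
  then show ?thesis using True by (simp add: dstep_def set_list_step)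
next
  case False
  then have "q \<in> fst p" using assms(2) by blast
  then show ?thesis using assms(3) by (auto simp: dstep_def succs_outside_Qd_def set_list_step)
qed

lemma drun_reaches:
  "w \<in> words \<Sigma> \<Longrightarrow> q \<in> fst (drun w k) \<union> set (snd (drun w k)) \<Longrightarrow> nba_reaches q0 \<delta> w k q"
proof (induction k arbitrary: q)
  case 0
  then show ?case by (simp add: nba_reaches_0)
next
  case (Suc k)
  have "w k \<in> \<Sigma>"
    using Suc.prems(1) by (simp add: words_def)
  moreover have "q \<in> fst (dstep (drun w k) (w k)) \<union> set (snd (dstep (drun w k) (w k)))"
    using Suc.prems(2) by simp
  ultimately obtain p where p: "p \<in> fst (drun w k) \<union> set (snd (drun w k))" "(p, w k, q) \<in> \<delta>"
    using dstep_predecessor[OF drun_list_subset_Qd[OF Suc.prems(1)]] by blast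
  show ?case
    by (rule nba_reaches_Suc[OF Suc.IH[OF Suc.prems(1) p(1)] p(2)])
qed

lemma nba_run_in_drun:
  assumes "w \<in> words \<Sigma>" "nba_run q0 \<delta> w r"
  shows "r k \<in> fst (drun w k) \<union> set (snd (drun w k))"
proof (induction k)
  case 0
  then show ?case using assms(2) by (simp add: nba_run_def)
next
  case (Suc k)
  have "(r k, w k, r (Suc k)) \<in> \<delta>"
    using assms(2) by (simp add: nba_run_def)
  then have "r (Suc k) \<in> fst (dstep (drun w k) (w k)) \<union> set (snd (dstep (drun w k) (w k)))"
    by (rule dstep_successor[OF drun_list_subset_Qd[OF assms(1)] Suc.IH])
  then show ?case by simp
qed

lemma nba_run_in_list:
  assumes "w \<in> words \<Sigma>" "nba_run q0 \<delta> w r" "r k \<in> Qd"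
  shows "r k \<in> set (snd (drun w k))"
  using nba_run_in_drun[OF assms(1,2), of k] drun_in_dstates[OF assms(1), of k] assms(3)
  unfolding dstates_def by auto

section \<open>Correctness\<close>

lemma accepting_run_tracked:
  assumes w: "w \<in> words \<Sigma>" and r: "nba_run q0 \<delta> w r" and "r t \<in> Qd"
  obtains p K where "\<And>k. k \<ge> K \<Longrightarrow>
    p < length (snd (drun w k)) \<and> snd (drun w k) ! p = r k \<and> \<not> merged (snd (drun w k)) (w k) p"
proof -
  define L where "L k = snd (drun w k)" for k
  have trans: "(r k, w k, r (Suc k)) \<in> \<delta>" for k
    using r by (simp add: nba_run_def)
  have in_Qd: "r k \<in> Qd" if "k \<ge> t" for k
    using that by (induction k rule: dec_induct) (use \<open>r t \<in> Qd\<close> trans Qd_closed in auto)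
  have listed: "r k \<in> set (L k)" if "k \<ge> t" for k
    unfolding L_def using nba_run_in_list[OF w r in_Qd[OF that]] .
  define pos where "pos k = (LEAST i. i < length (L k) \<and> L k ! i = r k)" for k
  have pos: "pos k < length (L k) \<and> L k ! pos k = r k" if "k \<ge> t" for k
    unfolding pos_def using listed[OF that] by (rule LeastI_ex[OF iffD1[OF in_set_conv_nth]])
  have pos_Suc: "pos (Suc k) \<le> pos k \<and> (merged (L k) (w k) (pos k) \<longrightarrow> pos (Suc k) < pos k)"
    if kt: "k \<ge> t" for k
  proof -
    have L_Suc: "L (Suc k) = list_step (fst (drun w k)) (L k) (w k)"
      by (simp add: L_def dstep_def)
    have r_Suc: "r (Suc k) = dsucc (L k ! pos k) (w k)"
      using pos[OF kt] dsucc_unique[OF in_Qd[OF kt] trans] by simp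
    obtain j where j: "j < length (L (Suc k))" "L (Suc k) ! j = r (Suc k)" "j \<le> pos k"
        "merged (L k) (w k) (pos k) \<Longrightarrow> j < pos k"
      using list_step_nth_earlier[OF conjunct1[OF pos[OF kt]]] unfolding L_Suc r_Suc by blast
    then have "pos (Suc k) \<le> j"
      unfolding pos_def by (intro Least_le) simp
    with j show ?thesis by auto
  qed
  obtain K where "K \<ge> t" and const: "\<And>k. k \<ge> K \<Longrightarrow> pos k = pos K"
    using nonincreasing_eventually_const[of t pos] pos_Suc by blast
  show thesis
  proof (rule that[of K "pos K"])
    fix k assume "k \<ge> K"
    then have "k \<ge> t" using \<open>K \<ge> t\<close> by simp
    then show "pos K < length (snd (drun w k)) \<and> snd (drun w k) ! pos K = r k \<and>
        \<not> merged (snd (drun w k)) (w k) (pos K)"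
      using pos[of k] pos_Suc[of k] const[of k] const[of "Suc k"] \<open>k \<ge> K\<close>
      unfolding L_def by auto
  qed
qed

lemma nba_accepted_colour_even:
  assumes w: "w \<in> words \<Sigma>" and r: "nba_run q0 \<delta> w r"
    and acc: "infinite {i. (r i, w i, r (Suc i)) \<in> \<alpha>}"
  shows "even (inf_often_min (\<lambda>k. colour (drun w k) (w k)))"
proof -
  define c where "c k = colour (drun w k) (w k)" for k
  have trans: "(r k, w k, r (Suc k)) \<in> \<delta>" for k
    using r by (simp add: nba_run_def)
  obtain t where "(r t, w t, r (Suc t)) \<in> \<alpha>"
    using acc not_finite_existsD by blast
  then have "r t \<in> Qd" using acc_subset_Qd by blast
  then obtain p K where tracked: "\<And>k. k \<ge> K \<Longrightarrow> p < length (snd (drun w k)) \<and>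
      snd (drun w k) ! p = r k \<and> \<not> merged (snd (drun w k)) (w k) p"
    using accepting_run_tracked[OF w r] by metis
  have "p < card Qd"
    using tracked[of K] length_le_card_Qd[OF drun_in_dstates[OF w]] by (meson le_refl less_le_trans)
  have "infinite {k. c k \<le> 2 * p + 2}"
    unfolding infinite_nat_iff_unbounded_le
  proof
    fix n
    obtain k where k: "k \<ge> max n K" "(r k, w k, r (Suc k)) \<in> \<alpha>"
      using acc unfolding infinite_nat_iff_unbounded_le by blast
    then have "r (Suc k) = dsucc (r k) (w k)"
      using dsucc_unique trans acc_subset_Qd by blast
    then have "accepting_at (snd (drun w k)) (w k) p"
      using k tracked[of k] by (simp add: accepting_at_def)
    then have "c k \<le> 2 * p + 2"
      unfolding c_def using tracked[of k] k(1) colour_le_accepting by simp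
    then show "\<exists>k\<ge>n. k \<in> {k. c k \<le> 2 * p + 2}" using k(1) by auto
  qed
  then have min_le: "inf_often_min c \<le> 2 * p + 2"
    using inf_often_min_le finite_range_colours[of w] unfolding c_def by blast
  obtain k where k: "k \<ge> K" "c k = inf_often_min c"
    using inf_often_min_occurs[OF finite_range_colours[of w]]
    unfolding c_def[symmetric] infinite_nat_iff_unbounded_le by blast
  have "merged (snd (drun w k)) (w k) p" if "odd (c k)"
  proof (rule odd_colour_merged)
    show "odd (colour (drun w k) (w k))"
      using that unfolding c_def .
    have "c k \<le> 2 * p + 2" "c k \<noteq> 2 * p + 2"
      using that k(2) min_le by auto
    then show "colour (drun w k) (w k) \<le> 2 * p + 1"
      unfolding c_def by linarith
  qed fact
  then show ?thesis
    using tracked[OF k(1)] k(2) unfolding c_def by auto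
qed

lemma unmerged_entry_run:
  assumes w: "w \<in> words \<Sigma>" and "p < length (snd (drun w k0))"
    and unmerged: "\<And>k. k \<ge> k0 \<Longrightarrow> p < length (snd (drun w k)) \<Longrightarrow> \<not> merged (snd (drun w k)) (w k) p"
  obtains r where "nba_run q0 \<delta> w r"
    "\<And>k. k \<ge> k0 \<Longrightarrow> p < length (snd (drun w k)) \<and> r k = snd (drun w k) ! p \<and> r (Suc k) = dsucc (r k) (w k)"
proof -
  define L where "L k = snd (drun w k)" for k
  have step: "p < length (L (Suc k)) \<and> L (Suc k) ! p = dsucc (L k ! p) (w k)"
    if "k \<ge> k0" "p < length (L k)" for k
    using list_step_nth_unmerged[OF that(2) unmerged[OF that[unfolded L_def], folded L_def]]
    by (simp add: L_def dstep_def)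
  have stays: "p < length (L k)" if "k \<ge> k0" for k
    using that by (induction k rule: dec_induct) (use assms(2) step in \<open>auto simp: L_def\<close>)
  define x where "x k = L k ! p" for k
  have x_Qd: "x k \<in> Qd" if "k \<ge> k0" for k
    using stays[OF that] drun_list_subset_Qd[OF w, of k] unfolding x_def L_def by auto
  have x_Suc: "x (Suc k) = dsucc (x k) (w k)" if "k \<ge> k0" for k
    using step[OF that stays[OF that]] unfolding x_def by simp
  have "(x k, w k, x (Suc k)) \<in> \<delta>" if "k \<ge> k0" for k
    using dsucc_trans[OF x_Qd[OF that]] w unfolding x_Suc[OF that] words_def by simp
  moreover have "nba_reaches q0 \<delta> w k0 (x k0)"
    using drun_reaches[OF w] stays[of k0] unfolding x_def L_def by simp
  ultimately obtain r where r: "nba_run q0 \<delta> w r" and rx: "\<And>k. k \<ge> k0 \<Longrightarrow> r k = x k"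
    using nba_run_extend by metis
  show thesis
  proof (rule that[OF r])
    fix k assume "k \<ge> k0"
    then show "p < length (snd (drun w k)) \<and> r k = snd (drun w k) ! p \<and> r (Suc k) = dsucc (r k) (w k)"
      using stays rx[of k] rx[of "Suc k"] x_Suc unfolding x_def L_def by simp
  qed
qed

lemma colour_even_nba_accepted:
  assumes w: "w \<in> words \<Sigma>" and even: "even (inf_often_min (\<lambda>k. colour (drun w k) (w k)))"
  obtains r where "nba_run q0 \<delta> w r" "infinite {i. (r i, w i, r (Suc i)) \<in> \<alpha>}"
proof -
  define c where "c k = colour (drun w k) (w k)" for k
  define m where "m = inf_often_min c"
  have m_often: "infinite {k. c k = m}"
    unfolding m_def c_def using finite_range_colours[of w] by (rule inf_often_min_occurs)
  obtain K where K: "\<And>k. k \<ge> K \<Longrightarrow> m \<le> c k"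
    using eventually_ge_inf_often_min[OF finite_range_colours[of w]] unfolding m_def c_def by blast
  obtain k0 where k0: "k0 \<ge> K" "c k0 = m"
    using m_often unfolding infinite_nat_iff_unbounded_le by blast
  obtain q where "m = 2 * q"
    using even unfolding m_def c_def by blast
  moreover have "m \<ge> 1"
    using colour_range k0(2) unfolding c_def by (metis atLeastAtMost_iff)
  ultimately obtain p where m: "m = 2 * p + 2"
    by (cases q) auto
  have at_m: "p < length (snd (drun w k)) \<and> accepting_at (snd (drun w k)) (w k) p" if "c k = m" for k
    using even_colour_accepting that unfolding c_def m by blast
  have "\<not> merged (snd (drun w k)) (w k) p" if "k \<ge> k0" "p < length (snd (drun w k))" for k
  proof
    assume "merged (snd (drun w k)) (w k) p"
    then have "c k \<le> 2 * p + 1"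
      unfolding c_def by (rule colour_le_merged[OF that(2)])
    moreover have "2 * p + 2 \<le> c k"
      using K[of k] that(1) k0(1) unfolding m by simp
    ultimately show False by simp
  qed
  then obtain r where r: "nba_run q0 \<delta> w r" and follows: "\<And>k. k \<ge> k0 \<Longrightarrow>
      p < length (snd (drun w k)) \<and> r k = snd (drun w k) ! p \<and> r (Suc k) = dsucc (r k) (w k)"
    using unmerged_entry_run[OF w conjunct1[OF at_m[OF k0(2)]]] by blast
  have "infinite {i. (r i, w i, r (Suc i)) \<in> \<alpha>}"
    unfolding infinite_nat_iff_unbounded_le
  proof
    fix n
    obtain k where k: "k \<ge> max n k0" "c k = m"
      using m_often unfolding infinite_nat_iff_unbounded_le by blast
    then have "(r k, w k, r (Suc k)) \<in> \<alpha>"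
      using at_m[OF k(2)] follows[of k] unfolding accepting_at_def by simp
    then show "\<exists>k\<ge>n. k \<in> {i. (r i, w i, r (Suc i)) \<in> \<alpha>}"
      using k(1) by auto
  qed
  with r show thesis by (rule that)
qed

lemma dpa_lang_eq_nba_lang: "dpa_lang ({q0}, []) \<Sigma> dstep colour = nba_lang q0 \<Sigma> \<delta> \<alpha>"
proof -
  have "dpa_lang ({q0}, []) \<Sigma> dstep colour =
      {w \<in> words \<Sigma>. even (inf_often_min (\<lambda>k. colour (drun w k) (w k)))}"
    by (simp add: dpa_lang_def inf_often_min_def drun_def)
  then show ?thesis
    unfolding nba_lang_def using nba_accepted_colour_even colour_even_nba_accepted by blast
qed

section \<open>Size\<close>

lemma finite_dstates: "finite dstates"
proof -
  have "{L. distinct L \<and> set L \<subseteq> Qd} = {xs. set xs \<subseteq> Qd \<and> distinct xs}"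
    by auto
  then show ?thesis
    unfolding dstates_def using finite_Q finite_subset_distinct[OF finite_Qd] by simp
qed

lemma is_dpa_dstates: "is_dpa dstates ({q0}, []) \<Sigma> dstep colour"
  unfolding is_dpa_def
  using finite_dstates finite_\<Sigma> initial_in_dstates dstep_in_dstates colour_range by auto

lemma card_dstates: "card dstates \<le> 2 ^ card Q * (\<Sum>i = 0..card Qd. fact (card Qd) div fact (card Qd - i))"
proof -
  have "card dstates = 2 ^ card (Q - Qd) * (\<Sum>i = 0..card Qd. fact (card Qd) div fact (card Qd - i))"
    unfolding dstates_def using finite_Q finite_Qd
    by (simp add: card_cartesian_product card_Pow card_distinct_lists)
  also have "\<dots> \<le> 2 ^ card Q * (\<Sum>i = 0..card Qd. fact (card Qd) div fact (card Qd - i))"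
    using card_mono[OF finite_Q, of "Q - Qd"] by (intro mult_le_mono1 power_increasing) auto
  finally show ?thesis .
qed

lemma card_colours: "card (dpa_colours dstates \<Sigma> colour) \<le> 2 * card Qd + 1"
proof -
  have "dpa_colours dstates \<Sigma> colour \<subseteq> {1..2 * card Qd + 1}"
    unfolding dpa_colours_def using colour_range by auto
  then show ?thesis using card_mono[of "{1..2 * card Qd + 1}"] by fastforce
qed

end

theorem mainTheorem4:
  fixes Q :: "'q set" and q0 :: 'q and \<Sigma> :: "'a set"
    and \<delta> \<alpha> :: "('q \<times> 'a \<times> 'q) set" and Qd :: "'q set"
  assumes "is_ldba Q q0 \<Sigma> \<delta> \<alpha> Qd"
  defines "n \<equiv> card Q" and "nd \<equiv> card Qd"
  shows "\<exists>(P :: nat set) p0 tr col.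
           is_dpa P p0 \<Sigma> tr col \<and>
           dpa_lang p0 \<Sigma> tr col = nba_lang q0 \<Sigma> \<delta> \<alpha> \<and>
           card P \<le> 2 ^ n * (\<Sum>i = 0..nd. fact nd div fact (nd - i)) \<and>
           (nd \<ge> 1 \<longrightarrow> real (card P) \<le> 2 ^ n * exp 1 * real nd * fact nd) \<and>
           card (dpa_colours P \<Sigma> col) \<le> 2 * nd + 1"
proof -
  interpret ldba Q q0 \<Sigma> \<delta> \<alpha> Qd by (rule ldba.intro) (rule assms(1))
  obtain P :: "nat set" and p0 tr col where dpa: "is_dpa P p0 \<Sigma> tr col"
    and lang: "dpa_lang p0 \<Sigma> tr col = dpa_lang ({q0}, []) \<Sigma> dstep colour"
    and card: "card P = card dstates"
    and colours: "dpa_colours P \<Sigma> col = dpa_colours dstates \<Sigma> colour"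
    using dpa_rename_states_nat[OF is_dpa_dstates] by blast
  have card_bound: "card P \<le> 2 ^ n * (\<Sum>i = 0..nd. fact nd div fact (nd - i))"
    using card card_dstates unfolding n_def nd_def by simp
  have real_bound: "real (card P) \<le> 2 ^ n * exp 1 * real nd * fact nd" if "nd \<ge> 1"
  proof -
    have "real (card P) \<le> 2 ^ n * real (\<Sum>i = 0..nd. fact nd div fact (nd - i))"
      using card_bound by (metis of_nat_le_iff of_nat_mult of_nat_numeral of_nat_power)
    also have "\<dots> \<le> 2 ^ n * (exp 1 * real nd * fact nd)"
      using sum_fact_div_le_exp[OF that] by simp
    finally show ?thesis by (simp add: mult.assoc)
  qed
  moreover have "dpa_lang p0 \<Sigma> tr col = nba_lang q0 \<Sigma> \<delta> \<alpha>"
    using lang dpa_lang_eq_nba_lang by simp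
  moreover have "card (dpa_colours P \<Sigma> col) \<le> 2 * nd + 1"
    using colours card_colours unfolding nd_def by simp
  ultimately show ?thesis
    using dpa card_bound by blast
qed

end
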